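(* Let $0<\alpha\le\beta$ with $\alpha\le1$, and let $\gamma:[0,1]\to\mathbb{R}^n$ be an $(\alpha,\beta)$-bi-Hölder curve with constant $1\le C_\gamma<\infty$. Then there exists $C=C(\alpha,C_\gamma,n)>0$ such that for all $0<r<1$, $$\Lambda(B(\widehat\gamma,r),r)\le C\, r^{\frac{\alpha-1}{\alpha}}.$$
   Context: A map $\gamma:[0,1]\to\mathbb{R}^n$ is an $(\alpha,\beta)$-bi-Hölder curve with constant $C_\gamma\ge1$ if $\frac1{C_\gamma}|x-y|^\beta\le|\gamma(x)-\gamma(y)|\le C_\gamma|x-y|^\alpha$ for all $x,y\in[0,1]$. $\widehat\gamma:=\gamma([0,1])$. For $A\subset\mathbb{R}^n$, $B(A,r):=\{x:\mathrm{dist}(x,A)\le r\}$. A rectifiable curve is the image of a Lipschitz map $[0,1]\to\mathbb{R}^n$. $\Lambda(E,r):=\inf\{\mathcal{H}^1(\Gamma):\Gamma \text{ a rectifiable curve with } B(\Gamma,r)\supset E\}$. *)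

theory Defs
  imports "HOL-Analysis.Analysis"
begin

definition hausdorff_pre1 :: "real \<Rightarrow> 'a::metric_space set \<Rightarrow> ennreal" where
  "hausdorff_pre1 \<delta> E =
     (INF U \<in> {U :: nat \<Rightarrow> 'a set. E \<subseteq> (\<Union>i. U i) \<and> (\<forall>i. diameter (U i) \<le> \<delta>)}.
        (\<Sum>i. ennreal (diameter (U i))))"

definition hausdorff1 :: "'a::metric_space set \<Rightarrow> ennreal" where
  "hausdorff1 E = (SUP \<delta> \<in> {0<..}. hausdorff_pre1 \<delta> E)"

definition bi_hoelder_curve :: "real \<Rightarrow> real \<Rightarrow> real \<Rightarrow> (real \<Rightarrow> 'a::metric_space) \<Rightarrow> bool" where
  "bi_hoelder_curve \<alpha> \<beta> C \<gamma> \<longleftrightarrow> C \<ge> 1 \<and>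
     (\<forall>x\<in>{0..1}. \<forall>y\<in>{0..1}.
        (1 / C) * \<bar>x - y\<bar> powr \<beta> \<le> dist (\<gamma> x) (\<gamma> y) \<and>
        dist (\<gamma> x) (\<gamma> y) \<le> C * \<bar>x - y\<bar> powr \<alpha>)"

definition nbhd :: "'a::metric_space set \<Rightarrow> real \<Rightarrow> 'a set" where
  "nbhd A r = {x. infdist x A \<le> r}"

definition rectifiable_curve :: "'a::metric_space set \<Rightarrow> bool" where
  "rectifiable_curve \<Gamma> \<longleftrightarrow> (\<exists>g L. L-lipschitz_on {0..1::real} g \<and> \<Gamma> = g ` {0..1})"

definition Lambda :: "'a::metric_space set \<Rightarrow> real \<Rightarrow> ennreal" where
  "Lambda E r = (INF \<Gamma> \<in> {\<Gamma>. rectifiable_curve \<Gamma> \<and> E \<subseteq> nbhd \<Gamma> r}. hausdorff1 \<Gamma>)"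

end

theory Submission
  imports Defs
begin

text \<open>Take \<open>N \<approx> (C\<^sub>\<gamma> / r) powr (1 / \<alpha>)\<close>, so that consecutive nodes \<open>\<gamma> (i / N)\<close> are
  \<open>r\<close>-close and every point of the \<open>r\<close>-neighbourhood of the curve is \<open>3 r\<close>-close to a node.
  Around each node place the same finite pattern of lattice points of mesh \<open>r / n\<close> filling a
  cube of radius about \<open>3 r\<close>; every point \<open>3 r\<close>-close to the node is then \<open>r\<close>-close to one
  of them. The polygon visiting these points node by node has \<open>O(N)\<close> edges of length \<open>O(r)\<close>,
  hence length \<open>O(N r) = O(r powr ((\<alpha> - 1) / \<alpha>))\<close>.\<close>

lemma diameter_lipschitz_image_le:
  fixes g :: "real \<Rightarrow> 'a::metric_space"
  assumes g: "L-lipschitz_on {a..b} g" and "a \<le> b"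
  shows "diameter (g ` {a..b}) \<le> L * (b - a)"
proof -
  have "dist (g s) (g t) \<le> L * (b - a)" if "s \<in> {a..b}" "t \<in> {a..b}" for s t
  proof -
    have "dist (g s) (g t) \<le> L * dist s t"
      using g that by (rule lipschitz_onD)
    also have "\<dots> \<le> L * (b - a)"
      using that lipschitz_on_nonneg[OF g] by (intro mult_left_mono) (auto simp: dist_real_def)
    finally show ?thesis .
  qed
  then show ?thesis
    using \<open>a \<le> b\<close> unfolding diameter_def by (auto intro!: cSUP_least)
qed

lemma unit_interval_subdivision:
  assumes "m > 0" "t \<in> {0..1}"
  obtains i where "i < m" "t \<in> {real i / m .. (real i + 1) / m}"
proof -
  define i where "i = min (nat \<lfloor>t * m\<rfloor>) (m - 1)"
  have "i < m" "real i \<le> t * m" "t * m \<le> real i + 1"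
    using assms by (auto simp: i_def min_def of_nat_diff) linarith+
  then show ?thesis
    using assms(1) by (intro that[of i]) (auto simp: field_simps)
qed

lemma hausdorff1_lipschitz_image_le:
  fixes g :: "real \<Rightarrow> 'a::metric_space"
  assumes g: "L-lipschitz_on {0..1} g"
  shows "hausdorff1 (g ` {0..1}) \<le> ennreal L"
  unfolding hausdorff1_def
proof (rule SUP_least)
  fix \<delta> :: real
  assume "\<delta> \<in> {0<..}"
  have L: "L \<ge> 0"
    using g by (rule lipschitz_on_nonneg)
  obtain m :: nat where "L / \<delta> < m"
    using reals_Archimedean2 by blast
  moreover have "0 \<le> L / \<delta>"
    using \<open>\<delta> \<in> {0<..}\<close> L by simp
  ultimately have "real m > 0"
    by linarith
  then have m: "m > 0" "L / m \<le> \<delta>"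
    using \<open>L / \<delta> < m\<close> \<open>\<delta> \<in> {0<..}\<close> by (auto simp: field_simps)
  define U where "U i = (if i < m then g ` {real i / m .. (real i + 1) / m} else {})" for i
  have diam: "diameter (U i) \<le> L / m" for i
  proof (cases "i < m")
    case True
    then have "{real i / m .. (real i + 1) / m} \<subseteq> {0..1}"
      by (auto simp: field_simps)
    with True m(1) show ?thesis
      using diameter_lipschitz_image_le[OF lipschitz_on_mono[OF g], of "real i / m" "(real i + 1) / m" L]
      by (auto simp: U_def field_simps)
  qed (use L in \<open>simp add: U_def\<close>)
  have "g ` {0..1} \<subseteq> (\<Union>i. U i)"
  proof
    fix x
    assume "x \<in> g ` {0..1}"
    then obtain t where t: "t \<in> {0..1}" "x = g t"
      by blast
    then obtain i where "i < m" "t \<in> {real i / m .. (real i + 1) / m}"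
      using unit_interval_subdivision[OF m(1)] by blast
    with t have "x \<in> U i"
      by (simp add: U_def)
    then show "x \<in> (\<Union>i. U i)"
      by blast
  qed
  moreover have "\<forall>i. diameter (U i) \<le> \<delta>"
    using diam m(2) order_trans by blast
  ultimately have "hausdorff_pre1 \<delta> (g ` {0..1}) \<le> (\<Sum>i. ennreal (diameter (U i)))"
    unfolding hausdorff_pre1_def by (intro INF_lower) blast
  also have "\<dots> = (\<Sum>i<m. ennreal (diameter (U i)))"
    by (rule suminf_finite) (auto simp: U_def)
  also have "\<dots> \<le> (\<Sum>i<m. ennreal (L / m))"
    using diam by (intro sum_mono ennreal_leI)
  also have "\<dots> = ennreal L"
    using m(1) L by (simp add: ennreal_of_nat_eq_real_of_nat ennreal_mult[symmetric])
  finally show "hausdorff_pre1 \<delta> (g ` {0..1}) \<le> ennreal L" .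
qed

fun polygonal_path :: "'a::real_normed_vector list \<Rightarrow> real \<Rightarrow> 'a" where
  "polygonal_path [] t = 0"
| "polygonal_path [q] t = q"
| "polygonal_path (q # q' # qs) t =
     (if t \<le> 1 then q + t *\<^sub>R (q' - q) else polygonal_path (q' # qs) (t - 1))"

lemma polygonal_path_of_nat:
  "j < length qs \<Longrightarrow> polygonal_path qs (real j) = qs ! j"
proof (induction qs arbitrary: j rule: induct_list012)
  case (3 q q' qs)
  consider "j = 0" | "j = 1" | (later) k where "j = Suc k" "k > 0"
    by (metis One_nat_def gr0I not0_implies_Suc)
  then show ?case
  proof cases
    case later
    then have "polygonal_path (q # q' # qs) (real j) = polygonal_path (q' # qs) (real k)"
      by simp
    also have "\<dots> = (q' # qs) ! k"
      using "3.IH"(2) "3.prems" \<open>j = Suc k\<close> by simp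
    finally show ?thesis
      using \<open>j = Suc k\<close> by simp
  qed simp_all
qed auto

lemma lipschitz_on_polygonal_path:
  fixes qs :: "'a::real_normed_vector list"
  assumes "qs \<noteq> []" "D \<ge> 0"
    and "\<And>j. Suc j < length qs \<Longrightarrow> dist (qs ! j) (qs ! Suc j) \<le> D"
  shows "D-lipschitz_on {0..real (length qs - 1)} (polygonal_path qs)"
  using assms
proof (induction qs rule: induct_list012)
  case (2 q)
  then show ?case
    by (simp add: lipschitz_on_constant lipschitz_on_mono[of 0])
next
  case (3 q q' qs)
  have segment: "D-lipschitz_on {0..1} (\<lambda>t. q + t *\<^sub>R (q' - q))"
  proof (rule lipschitz_onI)
    fix s t :: real
    have "dist (q + s *\<^sub>R (q' - q)) (q + t *\<^sub>R (q' - q)) = dist q q' * dist s t"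
      by (simp add: dist_norm dist_real_def scaleR_diff_left[symmetric] norm_minus_commute mult.commute)
    also have "\<dots> \<le> D * dist s t"
      using "3.prems"(3)[of 0] by (intro mult_right_mono) auto
    finally show "dist (q + s *\<^sub>R (q' - q)) (q + t *\<^sub>R (q' - q)) \<le> D * dist s t" .
  qed (use \<open>D \<ge> 0\<close> in simp)
  have IH: "D-lipschitz_on {0..real (length qs)} (polygonal_path (q' # qs))"
    using "3.IH"(2) "3.prems" by fastforce
  have rest: "D-lipschitz_on {1..real (length qs) + 1} (\<lambda>t. polygonal_path (q' # qs) (t - 1))"
  proof (rule lipschitz_onI)
    fix s t :: real
    assume "s \<in> {1..real (length qs) + 1}" "t \<in> {1..real (length qs) + 1}"
    then have "dist (polygonal_path (q' # qs) (s - 1)) (polygonal_path (q' # qs) (t - 1))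
        \<le> D * dist (s - 1) (t - 1)"
      by (intro lipschitz_onD[OF IH]) auto
    then show "dist (polygonal_path (q' # qs) (s - 1)) (polygonal_path (q' # qs) (t - 1))
        \<le> D * dist s t"
      by (simp add: dist_real_def)
  qed (use \<open>D \<ge> 0\<close> in simp)
  have "polygonal_path (q' # qs) 0 = q'"
    using polygonal_path_of_nat[of 0 "q' # qs"] by simp
  with lipschitz_on_concat[OF segment rest] show ?case
    by (simp add: add.commute)
qed auto

lemma rectifiable_curve_through_points:
  fixes qs :: "'a::real_normed_vector list"
  assumes "qs \<noteq> []" "D \<ge> 0"
    and "\<And>j. Suc j < length qs \<Longrightarrow> dist (qs ! j) (qs ! Suc j) \<le> D"
  obtains \<Gamma> where "rectifiable_curve \<Gamma>" "set qs \<subseteq> \<Gamma>"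
    "hausdorff1 \<Gamma> \<le> ennreal (real (length qs - 1) * D)"
proof -
  define m where "m = real (length qs - 1)"
  define g where "g t = polygonal_path qs (m * t)" for t
  have m0: "m \<ge> 0"
    by (simp add: m_def)
  have P: "D-lipschitz_on {0..m} (polygonal_path qs)"
    unfolding m_def using assms by (rule lipschitz_on_polygonal_path)
  have "(D * m)-lipschitz_on {0..1} g"
  proof (rule lipschitz_onI)
    fix s t :: real
    assume "s \<in> {0..1}" "t \<in> {0..1}"
    then have "dist (g s) (g t) \<le> D * dist (m * s) (m * t)"
      unfolding g_def using m0 by (intro lipschitz_onD[OF P]) (auto simp: mult_right_le_one_le)
    then show "dist (g s) (g t) \<le> D * m * dist s t"
      by (simp add: dist_real_def m_def abs_mult right_diff_distrib[symmetric] mult.assoc)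
  qed (use \<open>D \<ge> 0\<close> in \<open>simp add: m_def\<close>)
  moreover have "set qs \<subseteq> g ` {0..1}"
  proof
    fix q
    assume "q \<in> set qs"
    then obtain j where j: "j < length qs" "q = qs ! j"
      by (auto simp: in_set_conv_nth)
    show "q \<in> g ` {0..1}"
    proof (cases "m = 0")
      case True
      with j have "q = g 0"
        using polygonal_path_of_nat[of 0 qs] by (simp add: g_def m_def)
      then show ?thesis
        by auto
    next
      case False
      with j have "real j / m \<in> {0..1}" "q = g (real j / m)"
        using polygonal_path_of_nat[of j qs] by (auto simp: g_def m_def)
      then show ?thesis
        by blast
    qed
  qed
  ultimately show ?thesis
    using hausdorff1_lipschitz_image_le that unfolding rectifiable_curve_def m_def
    by (metis mult.commute)
qed

lemma dist_add_le_norm: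
  fixes x y v w :: "'a::real_normed_vector"
  shows "dist (x + v) (y + w) \<le> dist x y + norm v + norm w"
  using dist_triangle_add[of x v y w] norm_triangle_ineq4[of v w] by (simp add: dist_norm)

lemma mem_map_div_mod_upt:
  assumes "i < K" "l < M"
  shows "f i l \<in> set (map (\<lambda>j. f (j div M) (j mod M)) [0..<K * M])"
proof -
  have "i * M + l < (i + 1) * M"
    using assms(2) by simp
  also have "\<dots> \<le> K * M"
    using assms(1) by (intro mult_right_mono) auto
  finally show ?thesis
    using assms(2) by (auto intro!: image_eqI[of _ _ "i * M + l"])
qed

lemma rectifiable_curve_through_translates:
  fixes p :: "nat \<Rightarrow> 'a::real_normed_vector"
  assumes "\<rho> \<ge> 0" and steps: "\<And>i. i < N \<Longrightarrow> dist (p i) (p (Suc i)) \<le> \<rho>"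
    and "finite W" "W \<noteq> {}" and W: "\<And>w. w \<in> W \<Longrightarrow> norm w \<le> R"
  obtains \<Gamma> where "rectifiable_curve \<Gamma>" "\<And>i w. i \<le> N \<Longrightarrow> w \<in> W \<Longrightarrow> p i + w \<in> \<Gamma>"
    "hausdorff1 \<Gamma> \<le> ennreal (real ((N + 1) * card W) * (\<rho> + 2 * R))"
proof -
  obtain ws where ws: "set ws = W" "distinct ws"
    using finite_distinct_list[OF \<open>finite W\<close>] by blast
  define M where "M = card W"
  have M: "length ws = M" "M > 0"
    using ws \<open>finite W\<close> \<open>W \<noteq> {}\<close> by (auto simp: M_def distinct_card[symmetric] card_gt_0_iff)
  have "R \<ge> 0"
    using W \<open>W \<noteq> {}\<close> norm_ge_zero order_trans by blast
  define pts where "pts = map (\<lambda>j. p (j div M) + ws ! (j mod M)) [0..<(N + 1) * M]"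
  have len: "length pts = (N + 1) * M"
    by (simp add: pts_def)
  have step: "dist (pts ! j) (pts ! Suc j) \<le> \<rho> + 2 * R" if "Suc j < length pts" for j
  proof -
    define a b where "a = j div M" and "b = Suc j div M"
    have "b < N + 1"
      using that len M(2) by (simp add: b_def div_less_iff_less_mult)
    moreover have "b = a \<or> b = Suc a"
      by (simp add: a_def b_def div_Suc)
    ultimately have "dist (p a) (p b) \<le> \<rho>"
      using steps[of a] \<open>\<rho> \<ge> 0\<close> by (elim disjE) simp_all
    moreover have "norm (ws ! (j mod M)) \<le> R" "norm (ws ! (Suc j mod M)) \<le> R"
      using W ws(1) M by (metis mod_less_divisor nth_mem)+
    moreover have "pts ! j = p a + ws ! (j mod M)" "pts ! Suc j = p b + ws ! (Suc j mod M)"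
      using that len by (simp_all add: pts_def a_def b_def del: upt_Suc)
    then have "dist (pts ! j) (pts ! Suc j) \<le> dist (p a) (p b) + norm (ws ! (j mod M)) + norm (ws ! (Suc j mod M))"
      using dist_add_le_norm by simp
    ultimately show ?thesis
      by linarith
  qed
  have "pts \<noteq> []"
    using len M(2) by (metis add_gr_0 length_greater_0_conv nat_0_less_mult_iff zero_less_one)
  then obtain \<Gamma> where \<Gamma>: "rectifiable_curve \<Gamma>" "set pts \<subseteq> \<Gamma>"
    "hausdorff1 \<Gamma> \<le> ennreal (real (length pts - 1) * (\<rho> + 2 * R))"
    by (rule rectifiable_curve_through_points[OF _ _ step]) (use \<open>\<rho> \<ge> 0\<close> \<open>R \<ge> 0\<close> in simp_all)
  show ?thesis
  proof (rule that[OF \<Gamma>(1)])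
    fix i w
    assume "i \<le> N" "w \<in> W"
    then obtain l where "l < M" "w = ws ! l"
      using ws(1) M(1) by (auto simp: in_set_conv_nth)
    with \<open>i \<le> N\<close> have "p i + w \<in> set pts"
      unfolding pts_def using mem_map_div_mod_upt[of i "N + 1" l M "\<lambda>i l. p i + ws ! l"] by simp
    with \<Gamma>(2) show "p i + w \<in> \<Gamma>"
      by blast
  next
    have "length pts - 1 \<le> (N + 1) * card W"
      using len by (simp add: M_def)
    then have "real (length pts - 1) * (\<rho> + 2 * R) \<le> real ((N + 1) * card W) * (\<rho> + 2 * R)"
      by (rule mult_right_mono[OF of_nat_mono]) (use \<open>\<rho> \<ge> 0\<close> \<open>R \<ge> 0\<close> in simp)
    then show "hausdorff1 \<Gamma> \<le> ennreal (real ((N + 1) * card W) * (\<rho> + 2 * R))"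
      using \<Gamma>(3) ennreal_leI order_trans by blast
  qed
qed

definition integer_box :: "real \<Rightarrow> (real ^ 'n) set" where
  "integer_box K = {k. \<forall>i. k $ i \<in> \<int> \<and> \<bar>k $ i\<bar> \<le> K}"

lemma integer_box_mono: "K \<le> K' \<Longrightarrow> integer_box K \<subseteq> integer_box K'"
  using order_trans by (fastforce simp: integer_box_def)

lemma finite_integer_box: "finite (integer_box K :: (real ^ 'n) set)"
proof -
  define A where "A = real_of_int ` {-\<lceil>K\<rceil>..\<lceil>K\<rceil>}"
  have components: "vec_nth k \<in> UNIV \<rightarrow>\<^sub>E A" if "k \<in> integer_box K" for k :: "real ^ 'n"
  proof -
    have "k $ i \<in> A" for i
    proof -
      have "k $ i \<in> \<int>" "\<bar>k $ i\<bar> \<le> K"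
        using that by (simp_all add: integer_box_def)
      then obtain z where z: "k $ i = of_int z" "of_int \<bar>z\<bar> \<le> K"
        by (metis Ints_cases of_int_abs)
      then have "\<bar>z\<bar> \<le> \<lceil>K\<rceil>"
        using le_of_int_ceiling[of K] by linarith
      with z(1) show ?thesis
        unfolding A_def by (intro image_eqI[of _ _ z]) auto
    qed
    then show ?thesis
      by (simp add: PiE_UNIV_domain)
  qed
  have "integer_box K \<subseteq> vec_lambda ` (UNIV \<rightarrow>\<^sub>E A :: ('n \<Rightarrow> real) set)"
  proof
    fix k :: "real ^ 'n"
    assume "k \<in> integer_box K"
    then have "vec_nth k \<in> UNIV \<rightarrow>\<^sub>E A"
      by (rule components)
    moreover have "k = vec_lambda (vec_nth k)"
      by simp
    ultimately show "k \<in> vec_lambda ` (UNIV \<rightarrow>\<^sub>E A)"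
      by blast
  qed
  moreover have "finite (UNIV \<rightarrow>\<^sub>E A :: ('n \<Rightarrow> real) set)"
    by (rule finite_PiE) (auto simp: A_def)
  ultimately show ?thesis
    using finite_subset by blast
qed

lemma norm_le_integer_box:
  fixes k :: "real ^ 'n" and K :: real
  assumes "k \<in> integer_box K"
  shows "norm k \<le> real CARD('n) * K"
proof -
  have "norm k \<le> (\<Sum>i\<in>UNIV. \<bar>k $ i\<bar>)"
    by (rule norm_le_l1_cart)
  also have "\<dots> \<le> (\<Sum>i\<in>(UNIV::'n set). K)"
    by (rule sum_mono) (use assms in \<open>simp add: integer_box_def\<close>)
  finally show ?thesis
    by simp
qed

lemma exists_integer_box_point_near:
  fixes v :: "real ^ 'n" and h :: real
  assumes "h > 0"
  obtains k where "k \<in> integer_box (norm v / h + 1)" "norm (v - h *\<^sub>R k) \<le> CARD('n) * h"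
proof -
  define k :: "real ^ 'n" where "k = (\<chi> i. of_int \<lfloor>v $ i / h\<rfloor>)"
  have "\<bar>k $ i\<bar> \<le> norm v / h + 1" for i
  proof -
    have "\<bar>of_int \<lfloor>v $ i / h\<rfloor>\<bar> \<le> \<bar>v $ i / h\<bar> + 1"
      using floor_correct[of "v $ i / h"] by linarith
    moreover have "\<bar>v $ i / h\<bar> \<le> norm v / h"
      using component_le_norm_cart[of v i] assms by (simp add: abs_divide divide_right_mono)
    ultimately show ?thesis
      by (simp add: k_def)
  qed
  then have "k \<in> integer_box (norm v / h + 1)"
    by (simp add: integer_box_def k_def)
  have coord: "\<bar>(v - h *\<^sub>R k) $ i\<bar> \<le> h" for i
  proof -
    define x where "x = v $ i / h"
    have "(v - h *\<^sub>R k) $ i = h * (x - of_int \<lfloor>x\<rfloor>)"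
      using assms by (simp add: k_def x_def right_diff_distrib)
    moreover have "\<bar>x - of_int \<lfloor>x\<rfloor>\<bar> \<le> 1"
      using floor_correct[of x] by linarith
    ultimately show ?thesis
      using assms by (simp add: abs_mult)
  qed
  have "norm (v - h *\<^sub>R k) \<le> (\<Sum>i\<in>UNIV. \<bar>(v - h *\<^sub>R k) $ i\<bar>)"
    by (rule norm_le_l1_cart)
  also have "\<dots> \<le> (\<Sum>i\<in>(UNIV::'n set). h)"
    using coord by (rule sum_mono)
  finally have "norm (v - h *\<^sub>R k) \<le> CARD('n) * h"
    by simp
  with \<open>k \<in> integer_box (norm v / h + 1)\<close> show ?thesis
    by (rule that)
qed

lemma Lambda_le_hausdorff1:
  "rectifiable_curve \<Gamma> \<Longrightarrow> E \<subseteq> nbhd \<Gamma> r \<Longrightarrow> Lambda E r \<le> hausdorff1 \<Gamma>"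
  unfolding Lambda_def by (intro INF_lower) simp

lemma exists_lattice_offset_near:
  fixes x q :: "real ^ 'n"
  assumes "0 < r" "dist x q < 3 * r"
  obtains k where "k \<in> integer_box (3 * real CARD('n) + 1)" "dist x (q + (r / real CARD('n)) *\<^sub>R k) \<le> r"
proof -
  define n where "n = real CARD('n)"
  define h where "h = r / n"
  have "n \<ge> 1"
    by (simp add: n_def)
  with \<open>0 < r\<close> have "h > 0"
    by (simp add: h_def)
  then obtain k where k: "k \<in> integer_box (norm (x - q) / h + 1)" "norm (x - q - h *\<^sub>R k) \<le> n * h"
    using exists_integer_box_point_near by (auto simp: n_def)
  have "norm (x - q) / h + 1 \<le> 3 * n + 1"
    using assms \<open>n \<ge> 1\<close> by (simp add: h_def dist_norm field_simps)
  with k(1) have "k \<in> integer_box (3 * n + 1)"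
    using integer_box_mono by blast
  moreover have "dist x (q + h *\<^sub>R k) \<le> r"
    using k(2) \<open>n \<ge> 1\<close> by (simp add: dist_norm h_def diff_diff_eq)
  ultimately show ?thesis
    unfolding n_def h_def by (rule that)
qed

lemma Lambda_le_lattice_chain:
  fixes p :: "nat \<Rightarrow> real ^ 'n"
  defines "K \<equiv> 3 * real CARD('n) + 1"
  assumes "0 < r" and steps: "\<forall>i<N. dist (p i) (p (Suc i)) \<le> r"
    and near: "\<forall>x\<in>E. \<exists>i\<le>N. dist x (p i) < 3 * r"
  shows "Lambda E r \<le> ennreal (real ((N + 1) * card (integer_box K :: (real ^ 'n) set)) * (r * (2 * K + 1)))"
proof -
  define T where "T = (integer_box K :: (real ^ 'n) set)"
  define W where "W = (\<lambda>k. (r / CARD('n)) *\<^sub>R k) ` T"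
  have "norm w \<le> r * K" if "w \<in> W" for w
  proof -
    obtain k where "k \<in> T" "w = (r / CARD('n)) *\<^sub>R k"
      using \<open>w \<in> W\<close> by (auto simp: W_def)
    then have "norm w = r / CARD('n) * norm k"
      using \<open>0 < r\<close> by simp
    also have "\<dots> \<le> r / CARD('n) * (CARD('n) * K)"
      using norm_le_integer_box[of k K] \<open>k \<in> T\<close> \<open>0 < r\<close> by (intro mult_left_mono) (simp_all add: T_def)
    finally show ?thesis
      by simp
  qed
  moreover have "0 \<in> T"
    by (simp add: T_def K_def integer_box_def)
  then have "finite W" "W \<noteq> {}"
    using finite_integer_box by (auto simp: W_def T_def)
  ultimately obtain \<Gamma> where \<Gamma>: "rectifiable_curve \<Gamma>"
    "\<And>i w. i \<le> N \<Longrightarrow> w \<in> W \<Longrightarrow> p i + w \<in> \<Gamma>"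
    "hausdorff1 \<Gamma> \<le> ennreal (real ((N + 1) * card W) * (r + 2 * (r * K)))"
    using rectifiable_curve_through_translates[of r N p W "r * K"] steps \<open>0 < r\<close> by auto
  have "E \<subseteq> nbhd \<Gamma> r"
  proof
    fix x
    assume "x \<in> E"
    then obtain i where i: "i \<le> N" "dist x (p i) < 3 * r"
      using near by blast
    then obtain k where "k \<in> T" "dist x (p i + (r / CARD('n)) *\<^sub>R k) \<le> r"
      using exists_lattice_offset_near[OF \<open>0 < r\<close>] by (auto simp: T_def K_def)
    with \<Gamma>(2) i(1) show "x \<in> nbhd \<Gamma> r"
      unfolding nbhd_def W_def by (auto intro: infdist_le2)
  qed
  with \<Gamma>(1) have "Lambda E r \<le> hausdorff1 \<Gamma>"
    by (rule Lambda_le_hausdorff1)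
  also have "\<dots> \<le> ennreal (real ((N + 1) * card W) * (r + 2 * (r * K)))"
    by (rule \<Gamma>(3))
  also have "\<dots> \<le> ennreal (real ((N + 1) * card T) * (r * (2 * K + 1)))"
  proof (rule ennreal_leI)
    have "card W \<le> card T"
      unfolding W_def using finite_integer_box by (auto simp: T_def intro: card_image_le)
    then have "(N + 1) * card W \<le> (N + 1) * card T"
      by (rule mult_le_mono2)
    then have "real ((N + 1) * card W) * (r * (2 * K + 1)) \<le> real ((N + 1) * card T) * (r * (2 * K + 1))"
      by (rule mult_right_mono[OF of_nat_mono]) (use \<open>0 < r\<close> in \<open>simp add: K_def\<close>)
    then show "real ((N + 1) * card W) * (r + 2 * (r * K)) \<le> real ((N + 1) * card T) * (r * (2 * K + 1))"
      by (simp add: algebra_simps)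
  qed
  finally show ?thesis
    by (simp add: T_def)
qed

lemma Lambda_le_near_chain:
  "\<exists>c>0. \<forall>(p :: nat \<Rightarrow> real ^ 'n) N r E.
     0 < r \<and> (\<forall>i<N. dist (p i) (p (Suc i)) \<le> r) \<and> (\<forall>x\<in>E. \<exists>i\<le>N. dist x (p i) < 3 * r) \<longrightarrow>
     Lambda E r \<le> ennreal (c * real (N + 1) * r)"
proof -
  define K where "K = 3 * real CARD('n) + 1"
  define c where "c = real (card (integer_box K :: (real ^ 'n) set)) * (2 * K + 1)"
  have "(0 :: real ^ 'n) \<in> integer_box K"
    by (simp add: K_def integer_box_def)
  then have "card (integer_box K :: (real ^ 'n) set) > 0"
    using finite_integer_box by (auto simp: card_gt_0_iff)
  show ?thesis
  proof (intro exI[of _ c] conjI allI impI)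
    show "c > 0"
      using \<open>card (integer_box K :: (real ^ 'n) set) > 0\<close> by (simp add: c_def K_def add_pos_nonneg)
    fix p :: "nat \<Rightarrow> real ^ 'n" and N r E
    assume "0 < r \<and> (\<forall>i<N. dist (p i) (p (Suc i)) \<le> r) \<and> (\<forall>x\<in>E. \<exists>i\<le>N. dist x (p i) < 3 * r)"
    then have "Lambda E r \<le> ennreal (real ((N + 1) * card (integer_box K :: (real ^ 'n) set)) * (r * (2 * K + 1)))"
      unfolding K_def by (intro Lambda_le_lattice_chain) auto
    then show "Lambda E r \<le> ennreal (c * real (N + 1) * r)"
      by (simp add: c_def algebra_simps)
  qed
qed

lemma infdist_less_imp_dist_less:
  assumes "A \<noteq> {}" "infdist x A < d"
  obtains a where "a \<in> A" "dist x a < d"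
  using assms by (auto simp: infdist_notempty cINF_less_iff)

lemma hoelder_mesh:
  fixes \<alpha> C r :: real
  assumes "0 < \<alpha>" "1 \<le> C" "0 < r" "r < 1"
  obtains N :: nat where "N > 0" "C * (1 / N) powr \<alpha> \<le> r"
    "real (N + 1) * r \<le> 3 * C powr (1 / \<alpha>) * r powr ((\<alpha> - 1) / \<alpha>)"
proof -
  define t where "t = (C / r) powr (1 / \<alpha>)"
  have "C / r > 1"
    using assms by (simp add: field_simps)
  then have "t \<ge> 1"
    using assms(1) by (simp add: t_def ge_one_powr_ge_zero)
  define N where "N = nat \<lceil>t\<rceil>"
  have N: "t \<le> real N" "real N < t + 1"
    using \<open>t \<ge> 1\<close> by (simp_all add: N_def) linarith
  have "(1 / real N) powr \<alpha> \<le> (1 / t) powr \<alpha>"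
    using N(1) \<open>t \<ge> 1\<close> assms(1) by (intro powr_mono2 divide_left_mono) auto
  also have "\<dots> = r / C"
    using \<open>C / r > 1\<close> assms by (simp add: t_def powr_divide powr_powr)
  finally have "C * (1 / real N) powr \<alpha> \<le> r"
    using assms(2,3) by (simp add: field_simps)
  moreover have "N > 0"
    using N \<open>t \<ge> 1\<close> by simp
  moreover have "real (N + 1) * r \<le> 3 * t * r"
    using N \<open>t \<ge> 1\<close> \<open>0 < r\<close> by (intro mult_right_mono) auto
  moreover have "t * r = C powr (1 / \<alpha>) * r powr ((\<alpha> - 1) / \<alpha>)"
  proof -
    have "t * r = C powr (1 / \<alpha>) * r powr (1 - 1 / \<alpha>)"
      using assms by (simp add: t_def powr_divide powr_diff)
    also have "1 - 1 / \<alpha> = (\<alpha> - 1) / \<alpha>"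
      using \<open>0 < \<alpha>\<close> by (simp add: field_simps)
    finally show ?thesis .
  qed
  ultimately show ?thesis
    using that by (simp add: mult.assoc)
qed

lemma hoelder_curve_grid:
  fixes \<gamma> :: "real \<Rightarrow> 'a::metric_space" and N :: nat
  assumes hoelder: "\<forall>x\<in>{0..1}. \<forall>y\<in>{0..1}. dist (\<gamma> x) (\<gamma> y) \<le> C * \<bar>x - y\<bar> powr \<alpha>"
    and "0 < \<alpha>" "0 \<le> C" "0 < r" "N > 0" "C * (1 / N) powr \<alpha> \<le> r"
  shows "\<forall>i<N. dist (\<gamma> (i / N)) (\<gamma> (Suc i / N)) \<le> r"
    and "\<forall>x\<in>nbhd (\<gamma> ` {0..1}) r. \<exists>i\<le>N. dist x (\<gamma> (i / N)) < 3 * r"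
proof -
  have close: "dist (\<gamma> s) (\<gamma> t) \<le> r" if "s \<in> {0..1}" "t \<in> {0..1}" "\<bar>s - t\<bar> \<le> 1 / N" for s t
  proof -
    have "dist (\<gamma> s) (\<gamma> t) \<le> C * \<bar>s - t\<bar> powr \<alpha>"
      using hoelder that by blast
    also have "\<dots> \<le> C * (1 / N) powr \<alpha>"
      using that \<open>0 < \<alpha>\<close> \<open>0 \<le> C\<close> by (intro mult_left_mono powr_mono2) auto
    finally show ?thesis
      using assms(6) by linarith
  qed
  show "\<forall>i<N. dist (\<gamma> (i / N)) (\<gamma> (Suc i / N)) \<le> r"
    using \<open>N > 0\<close> by (auto intro!: close simp: field_simps)
  show "\<forall>x\<in>nbhd (\<gamma> ` {0..1}) r. \<exists>i\<le>N. dist x (\<gamma> (i / N)) < 3 * r"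
  proof
    fix x
    assume "x \<in> nbhd (\<gamma> ` {0..1}) r"
    then have "infdist x (\<gamma> ` {0..1}) < 2 * r"
      using \<open>r > 0\<close> by (simp add: nbhd_def)
    then obtain s where s: "s \<in> {0..1}" "dist x (\<gamma> s) < 2 * r"
      by (rule infdist_less_imp_dist_less[rotated]) auto
    then obtain i where i: "i < N" "s \<in> {real i / N .. (real i + 1) / N}"
      using unit_interval_subdivision[OF \<open>N > 0\<close>] by blast
    then have "\<bar>s - real i / N\<bar> \<le> 1 / N"
      by (simp add: add_divide_distrib abs_le_iff)
    moreover have "real i / N \<in> {0..1}"
      using i(1) by simp
    ultimately have "dist (\<gamma> s) (\<gamma> (i / N)) \<le> r"
      using s(1) by (intro close)
    with s(2) i(1) show "\<exists>i\<le>N. dist x (\<gamma> (i / N)) < 3 * r"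
      using dist_triangle[of x "\<gamma> (i / N)" "\<gamma> s"] by (intro exI[of _ i]) auto
  qed
qed

theorem lemma3p10:
  fixes \<alpha> :: real
  assumes "0 < \<alpha>" "\<alpha> \<le> 1"
  shows "\<forall>C\<^sub>\<gamma>. \<exists>C>0. \<forall>(\<beta>::real) (\<gamma> :: real \<Rightarrow> real ^ 'n).
           \<alpha> \<le> \<beta> \<and> bi_hoelder_curve \<alpha> \<beta> C\<^sub>\<gamma> \<gamma> \<longrightarrow>
           (\<forall>r. 0 < r \<and> r < 1 \<longrightarrow>
              Lambda (nbhd (\<gamma> ` {0..1}) r) r \<le> ennreal (C * r powr ((\<alpha> - 1) / \<alpha>)))"
proof
  fix C\<^sub>\<gamma> :: real
  obtain c where "c > 0" and chain: "\<forall>(p :: nat \<Rightarrow> real ^ 'n) N r E.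
      0 < r \<and> (\<forall>i<N. dist (p i) (p (Suc i)) \<le> r) \<and> (\<forall>x\<in>E. \<exists>i\<le>N. dist x (p i) < 3 * r) \<longrightarrow>
      Lambda E r \<le> ennreal (c * real (N + 1) * r)"
    using Lambda_le_near_chain by blast
  show "\<exists>C>0. \<forall>\<beta> (\<gamma> :: real \<Rightarrow> real ^ 'n). \<alpha> \<le> \<beta> \<and> bi_hoelder_curve \<alpha> \<beta> C\<^sub>\<gamma> \<gamma> \<longrightarrow>
      (\<forall>r. 0 < r \<and> r < 1 \<longrightarrow> Lambda (nbhd (\<gamma> ` {0..1}) r) r \<le> ennreal (C * r powr ((\<alpha> - 1) / \<alpha>)))"
  proof (cases "C\<^sub>\<gamma> \<ge> 1")
    case False
    then show ?thesis
      by (intro exI[of _ 1]) (simp add: bi_hoelder_curve_def)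
  next
    case True
    show ?thesis
    proof (intro exI[of _ "3 * c * C\<^sub>\<gamma> powr (1 / \<alpha>)"] conjI allI impI)
      show "3 * c * C\<^sub>\<gamma> powr (1 / \<alpha>) > 0"
        using \<open>c > 0\<close> True by simp
      fix \<beta> and \<gamma> :: "real \<Rightarrow> real ^ 'n" and r :: real
      assume "\<alpha> \<le> \<beta> \<and> bi_hoelder_curve \<alpha> \<beta> C\<^sub>\<gamma> \<gamma>" and r: "0 < r \<and> r < 1"
      then have hoelder: "\<forall>x\<in>{0..1}. \<forall>y\<in>{0..1}. dist (\<gamma> x) (\<gamma> y) \<le> C\<^sub>\<gamma> * \<bar>x - y\<bar> powr \<alpha>"
        by (simp add: bi_hoelder_curve_def)
      obtain N :: nat where N: "N > 0" "C\<^sub>\<gamma> * (1 / N) powr \<alpha> \<le> r"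
        "real (N + 1) * r \<le> 3 * C\<^sub>\<gamma> powr (1 / \<alpha>) * r powr ((\<alpha> - 1) / \<alpha>)"
        using hoelder_mesh[OF \<open>0 < \<alpha>\<close> True] r by blast
      have "Lambda (nbhd (\<gamma> ` {0..1}) r) r \<le> ennreal (c * real (N + 1) * r)"
        using chain[rule_format, of r N "\<lambda>i. \<gamma> (i / N)"] hoelder_curve_grid[OF hoelder \<open>0 < \<alpha>\<close> _ _ N(1,2)] True r
        by simp
      also have "\<dots> \<le> ennreal (3 * c * C\<^sub>\<gamma> powr (1 / \<alpha>) * r powr ((\<alpha> - 1) / \<alpha>))"
        using mult_left_mono[OF N(3), of c] \<open>c > 0\<close> by (intro ennreal_leI) (simp add: mult_ac)
      finally show "Lambda (nbhd (\<gamma> ` {0..1}) r) r \<le> ennreal (3 * c * C\<^sub>\<gamma> powr (1 / \<alpha>) * r powr ((\<alpha> - 1) / \<alpha>))" .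
    qed
  qed
qed

end
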